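(* Consider a PWA system, as defined in the context, satisfying (A1)–(A4) with known global dynamical relative degree $\mu\ge1$. Then the inverse system with $u_k$ as output is given by the implicit, anticausal system $$x_{k+1}=\overline{\mathbf{A}}_k x_k+\overline{\mathbf{B}}_k y_{k+\mu}+\overline{\mathbf{F}}_k-\mathbf{B}_k\mathcal{D}_k^{-1}\Psi_k(u_{k+1},\dots,u_{k+\mu-1}),$$ $$u_k=\overline{\mathbf{C}}_k x_k+\overline{\mathbf{D}}_k y_{k+\mu}+\overline{\mathbf{G}}_k-\mathcal{D}_k^{-1}\Psi_k(u_{k+1},\dots,u_{k+\mu-1}),$$ where $\overline{\mathbf{D}}_k=\mathcal{D}_k^{-1}$, $\overline{\mathbf{C}}_k=-\overline{\mathbf{D}}_k\mathcal{C}_k$, $\overline{\mathbf{G}}_k=-\overline{\mathbf{D}}_k\mathcal{G}_k$, $\overline{\mathbf{A}}_k=\mathbf{A}_k+\mathbf{B}_k\overline{\mathbf{C}}_k$, $\overline{\mathbf{B}}_k=\mathbf{B}_k\overline{\mathbf{D}}_k$, $\overline{\mathbf{F}}_k=\mathbf{F}_k+\mathbf{B}_k\overline{\mathbf{G}}_k$, and $\mathcal{C}_k=\mathbf{C}_{k+\mu}\prod_{m=0}^{\mu-1}\mathbf{A}_{k+m}$, $\mathcal{D}_k=\mathbf{C}_{k+\mu}\big(\prod_{m=1}^{\mu-1}\mathbf{A}_{k+m}\big)\mathbf{B}_k$, $\mathcal{G}_k=\mathbf{C}_{k+\mu}\sum_{s=0}^{\mu-1}\big(\prod_{m=s+1}^{\mu-1}\mathbf{A}_{k+m}\big)\mathbf{F}_{k+s}+\mathbf{G}_{k+\mu}$,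 $\Psi_k(u_{k+1},\dots,u_{k+\mu-1})=\mathbf{C}_{k+\mu}\sum_{s=1}^{\mu-1}\big(\prod_{m=s+1}^{\mu-1}\mathbf{A}_{k+m}\big)\mathbf{B}_{k+s}u_{k+s}$ (products ordered with largest index $m$ on the left, empty products equal to the identity, empty sums equal to $0$). In general this inverse is implicit: there exist such systems for which the equation for $y_{k+\mu}$ does not have a unique solution $u_k$, so no explicit formula for $u_k$ exists.
   Context: A discrete-time piecewise affine (PWA) system is $x_{k+1}=\mathbf{A}_k x_k+\mathbf{B}_k u_k+\mathbf{F}_k$, $y_k=\mathbf{C}_k x_k+\mathbf{D}_k u_k+\mathbf{G}_k$, $k\in\mathbb{Z}$, with state $x_k\in\mathbb{R}^{n_x}$, input $u_k\in\mathbb{R}^{n_u}$, output $y_k\in\mathbb{R}^{n_y}$. For each $M\in\{A,B,F,C,D,G\}$, $\mathbf{M}_k=\sum_{q=1}^{|Q|} M_{q,k}K_q(\delta_k)$, where the $M_{q,k}$ are real matrices (possibly time-varying), $\delta_k=\delta(x_k)=H(Px_k-\theta)$ with $H$ the elementwise Heaviside step function, $P\in\mathbb{R}^{n_P\times n_x}$, $\theta\in\mathbb{R}^{n_P}$, and $K_q(\delta)=1$ if $\delta\in\Delta^*_q$ and $0$ otherwise ($\Delta^*_q$ a set of binary vectors). The locations $Q_q=\{x:\delta(x)\in\Delta^*_q\}$ are disjoint, have union $\mathbb{R}^{n_x}$, and each is a union of disjoint convex polytopes. Note that $\mathbf{M}_{k+m}$ depends on $x_{k+m}$, which for $m\ge1$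 depends on $u_k$. The $q$-th component model is the affine system with matrices $A_{q,k},\dots,G_{q,k}$ and relative degree $\mu_q$ (number of time steps for an input value to influence the output). Global dynamical relative degree: the smallest integer $\mu\ge 0$ such that the explicit expression of $y_{k+\mu}$ in terms of the component matrices, the selector functions $K_q$, $x_k$ and $u_i$ ($i\ge k$) contains $u_k$ outside of a selector function for every switching sequence on time steps $k,\dots,k+\mu$. Assumptions: (A1) $x_0$ lies in the set of initial conditions from which every location is reachable in finite time; (A2) single-input single-output; (A3) switching depends only on the state, not the input; (A4) all component models have the same relative degree $\mu_c$ for all $q$ and $k$. A system is anticausal if computing the current output requires future input values. *)

theory Defs
  imports "HOL-Analysis.Analysis"
begin

text \<open>Data of a PWA system with location type 'q (finite), state space real^'n,
 n_P hyperplanes indexed by 'p: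
  A :: 'q \<Rightarrow> int \<Rightarrow> real^'n^'n   (A_{q,k})
  B :: 'q \<Rightarrow> int \<Rightarrow> real^'n       (B_{q,k}, a column, since n_u = 1)
  F :: 'q \<Rightarrow> int \<Rightarrow> real^'n       (F_{q,k})
  C :: 'q \<Rightarrow> int \<Rightarrow> real^'n       (C_{q,k}, a row, since n_y = 1; C x = C \<bullet> x)
  D :: 'q \<Rightarrow> int \<Rightarrow> real          (D_{q,k})
  G :: 'q \<Rightarrow> int \<Rightarrow> real          (G_{q,k})
  P :: real^'n^'p, \<theta> :: real^'p, \<Delta> :: 'q \<Rightarrow> (real^'p) set  (the sets \<Delta>*_q).\<close>

definition heav :: "real^'p \<Rightarrow> real^'p" where
  "heav v = (\<chi> i. if v $ i \<ge> 0 then 1 else 0)"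

definition delta :: "real^'n^'p \<Rightarrow> real^'p \<Rightarrow> real^'n \<Rightarrow> real^'p" where
  "delta P \<theta> x = heav (P *v x - \<theta>)"

definition Ksel :: "('q \<Rightarrow> (real^'p) set) \<Rightarrow> real^'n^'p \<Rightarrow> real^'p \<Rightarrow> 'q \<Rightarrow> real^'n \<Rightarrow> real" where
  "Ksel \<Delta> P \<theta> q x = (if delta P \<theta> x \<in> \<Delta> q then 1 else 0)"

text \<open>Global (switched) matrix  bold-M_k = \<Sum>_q M_{q,k} K_q(\<delta>(x_k)),  evaluated at state x and time k.\<close>
definition selM :: "('q::finite \<Rightarrow> (real^'p) set) \<Rightarrow> real^'n^'p \<Rightarrow> real^'p
      \<Rightarrow> ('q \<Rightarrow> int \<Rightarrow> 'v::real_vector) \<Rightarrow> int \<Rightarrow> real^'n \<Rightarrow> 'v" where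
  "selM \<Delta> P \<theta> M k x = (\<Sum>q\<in>UNIV. Ksel \<Delta> P \<theta> q x *\<^sub>R M q k)"

text \<open>Well-formedness: the \<Delta>*_q consist of binary vectors and the locations
 Q_q = {x. \<delta>(x) \<in> \<Delta>*_q} are pairwise disjoint and cover the state space.
 (Each Q_q is then automatically a finite union of disjoint polyhedra, being a union of
 cells {x. \<delta>(x) = b}.)\<close>
definition pwa_wellformed :: "('q \<Rightarrow> (real^'p) set) \<Rightarrow> real^'n^'p \<Rightarrow> real^'p \<Rightarrow> bool" where
  "pwa_wellformed \<Delta> P \<theta> \<longleftrightarrow>
     (\<forall>q. \<forall>b\<in>\<Delta> q. \<forall>i. b $ i = 0 \<or> b $ i = 1) \<and>
     (\<forall>x. \<exists>!q. delta P \<theta> x \<in> \<Delta> q)"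

definition is_traj :: "('q::finite \<Rightarrow> (real^'p) set) \<Rightarrow> real^'n^'p \<Rightarrow> real^'p
    \<Rightarrow> ('q \<Rightarrow> int \<Rightarrow> real^'n^'n) \<Rightarrow> ('q \<Rightarrow> int \<Rightarrow> real^'n) \<Rightarrow> ('q \<Rightarrow> int \<Rightarrow> real^'n)
    \<Rightarrow> ('q \<Rightarrow> int \<Rightarrow> real^'n) \<Rightarrow> ('q \<Rightarrow> int \<Rightarrow> real) \<Rightarrow> ('q \<Rightarrow> int \<Rightarrow> real)
    \<Rightarrow> (int \<Rightarrow> real^'n) \<Rightarrow> (int \<Rightarrow> real) \<Rightarrow> (int \<Rightarrow> real) \<Rightarrow> bool" where
  "is_traj \<Delta> P \<theta> A B F C D G x u y \<longleftrightarrow>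
     (\<forall>k. x (k + 1) = selM \<Delta> P \<theta> A k (x k) *v x k + u k *\<^sub>R selM \<Delta> P \<theta> B k (x k)
                     + selM \<Delta> P \<theta> F k (x k)) \<and>
     (\<forall>k. y k = selM \<Delta> P \<theta> C k (x k) \<bullet> x k + selM \<Delta> P \<theta> D k (x k) * u k
               + selM \<Delta> P \<theta> G k (x k))"

primrec run :: "('q::finite \<Rightarrow> (real^'p) set) \<Rightarrow> real^'n^'p \<Rightarrow> real^'p
    \<Rightarrow> ('q \<Rightarrow> int \<Rightarrow> real^'n^'n) \<Rightarrow> ('q \<Rightarrow> int \<Rightarrow> real^'n) \<Rightarrow> ('q \<Rightarrow> int \<Rightarrow> real^'n)
    \<Rightarrow> int \<Rightarrow> real^'n \<Rightarrow> (int \<Rightarrow> real) \<Rightarrow> nat \<Rightarrow> real^'n" where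
  "run \<Delta> P \<theta> A B F k0 x0 v 0 = x0"
| "run \<Delta> P \<theta> A B F k0 x0 v (Suc n) =
     (let t = k0 + int n; s = run \<Delta> P \<theta> A B F k0 x0 v n in
      selM \<Delta> P \<theta> A t s *v s + v t *\<^sub>R selM \<Delta> P \<theta> B t s + selM \<Delta> P \<theta> F t s)"

definition run_out :: "('q::finite \<Rightarrow> (real^'p) set) \<Rightarrow> real^'n^'p \<Rightarrow> real^'p
    \<Rightarrow> ('q \<Rightarrow> int \<Rightarrow> real^'n^'n) \<Rightarrow> ('q \<Rightarrow> int \<Rightarrow> real^'n) \<Rightarrow> ('q \<Rightarrow> int \<Rightarrow> real^'n)
    \<Rightarrow> ('q \<Rightarrow> int \<Rightarrow> real^'n) \<Rightarrow> ('q \<Rightarrow> int \<Rightarrow> real) \<Rightarrow> ('q \<Rightarrow> int \<Rightarrow> real)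
    \<Rightarrow> int \<Rightarrow> real^'n \<Rightarrow> (int \<Rightarrow> real) \<Rightarrow> nat \<Rightarrow> real" where
  "run_out \<Delta> P \<theta> A B F C D G k0 x0 v n =
     (let t = k0 + int n; s = run \<Delta> P \<theta> A B F k0 x0 v n in
      selM \<Delta> P \<theta> C t s \<bullet> s + selM \<Delta> P \<theta> D t s * v t + selM \<Delta> P \<theta> G t s)"

definition all_locations_reachable :: "('q::finite \<Rightarrow> (real^'p) set) \<Rightarrow> real^'n^'p \<Rightarrow> real^'p
    \<Rightarrow> ('q \<Rightarrow> int \<Rightarrow> real^'n^'n) \<Rightarrow> ('q \<Rightarrow> int \<Rightarrow> real^'n) \<Rightarrow> ('q \<Rightarrow> int \<Rightarrow> real^'n)
    \<Rightarrow> real^'n \<Rightarrow> bool" where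
  "all_locations_reachable \<Delta> P \<theta> A B F x0 \<longleftrightarrow>
     (\<forall>q. \<exists>v N. delta P \<theta> (run \<Delta> P \<theta> A B F 0 x0 v N) \<in> \<Delta> q)"

text \<open>Ordered matrix product  \<Prod>_{m=a}^{b} M_m = M_b \<cdot> ... \<cdot> M_a  (largest index on the left);
 the identity if b < a.\<close>
definition oprod :: "(nat \<Rightarrow> real^'n^'n) \<Rightarrow> nat \<Rightarrow> nat \<Rightarrow> real^'n^'n" where
  "oprod M a b = foldl (\<lambda>Q m. M m ** Q) (mat 1) [a..<Suc b]"

definition comp_markov :: "('q \<Rightarrow> int \<Rightarrow> real^'n^'n) \<Rightarrow> ('q \<Rightarrow> int \<Rightarrow> real^'n)
    \<Rightarrow> ('q \<Rightarrow> int \<Rightarrow> real^'n) \<Rightarrow> ('q \<Rightarrow> int \<Rightarrow> real) \<Rightarrow> 'q \<Rightarrow> int \<Rightarrow> nat \<Rightarrow> real" where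
  "comp_markov A B C D q k r =
     (if r = 0 then D q k
      else (C q (k + int r) v* oprod (\<lambda>m. A q (k + int m)) 1 (r - 1)) \<bullet> B q k)"

definition comp_reldeg :: "('q \<Rightarrow> int \<Rightarrow> real^'n^'n) \<Rightarrow> ('q \<Rightarrow> int \<Rightarrow> real^'n)
    \<Rightarrow> ('q \<Rightarrow> int \<Rightarrow> real^'n) \<Rightarrow> ('q \<Rightarrow> int \<Rightarrow> real) \<Rightarrow> 'q \<Rightarrow> int \<Rightarrow> nat \<Rightarrow> bool" where
  "comp_reldeg A B C D q k r \<longleftrightarrow>
     comp_markov A B C D q k r \<noteq> 0 \<and> (\<forall>j<r. comp_markov A B C D q k j = 0)"

text \<open>Coefficient of u_k in the explicit expression of y_{k+j} for a fixed switching sequence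
 \<sigma> (\<sigma> m = location active at time k + m): D_{\<sigma>0,k} for j = 0 and
 C_{\<sigma> j,k+j} A_{\<sigma>(j-1),k+j-1} ... A_{\<sigma>1,k+1} B_{\<sigma>0,k} for j \<ge> 1.\<close>
definition sw_coef :: "('q \<Rightarrow> int \<Rightarrow> real^'n^'n) \<Rightarrow> ('q \<Rightarrow> int \<Rightarrow> real^'n)
    \<Rightarrow> ('q \<Rightarrow> int \<Rightarrow> real^'n) \<Rightarrow> ('q \<Rightarrow> int \<Rightarrow> real) \<Rightarrow> (nat \<Rightarrow> 'q) \<Rightarrow> int \<Rightarrow> nat \<Rightarrow> real" where
  "sw_coef A B C D \<sigma> k j =
     (if j = 0 then D (\<sigma> 0) k
      else (C (\<sigma> j) (k + int j) v* oprod (\<lambda>m. A (\<sigma> m) (k + int m)) 1 (j - 1)) \<bullet> B (\<sigma> 0) k)"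

text \<open>Global dynamical relative degree: smallest \<mu> such that, for every k and every switching
 sequence on k..k+\<mu>, y_{k+\<mu>} contains u_k (nonzero coefficient) outside the selectors.\<close>
definition global_reldeg :: "('q \<Rightarrow> int \<Rightarrow> real^'n^'n) \<Rightarrow> ('q \<Rightarrow> int \<Rightarrow> real^'n)
    \<Rightarrow> ('q \<Rightarrow> int \<Rightarrow> real^'n) \<Rightarrow> ('q \<Rightarrow> int \<Rightarrow> real) \<Rightarrow> nat \<Rightarrow> bool" where
  "global_reldeg A B C D \<mu> \<longleftrightarrow>
     (\<forall>k \<sigma>. sw_coef A B C D \<sigma> k \<mu> \<noteq> 0) \<and>
     (\<forall>j<\<mu>. \<not> (\<forall>k \<sigma>. sw_coef A B C D \<sigma> k j \<noteq> 0))"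

definition calC :: "(int \<Rightarrow> real^'n^'n) \<Rightarrow> (int \<Rightarrow> real^'n) \<Rightarrow> nat \<Rightarrow> int \<Rightarrow> real^'n" where
  "calC At Ct \<mu> k = Ct (k + int \<mu>) v* oprod (\<lambda>m. At (k + int m)) 0 (\<mu> - 1)"

definition calD :: "(int \<Rightarrow> real^'n^'n) \<Rightarrow> (int \<Rightarrow> real^'n) \<Rightarrow> (int \<Rightarrow> real^'n)
    \<Rightarrow> nat \<Rightarrow> int \<Rightarrow> real" where
  "calD At Bt Ct \<mu> k = (Ct (k + int \<mu>) v* oprod (\<lambda>m. At (k + int m)) 1 (\<mu> - 1)) \<bullet> Bt k"

definition calG :: "(int \<Rightarrow> real^'n^'n) \<Rightarrow> (int \<Rightarrow> real^'n) \<Rightarrow> (int \<Rightarrow> real^'n)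
    \<Rightarrow> (int \<Rightarrow> real) \<Rightarrow> nat \<Rightarrow> int \<Rightarrow> real" where
  "calG At Ft Ct Gt \<mu> k =
     Ct (k + int \<mu>) \<bullet> (\<Sum>s<\<mu>. oprod (\<lambda>m. At (k + int m)) (s + 1) (\<mu> - 1) *v Ft (k + int s))
     + Gt (k + int \<mu>)"

definition Psi :: "(int \<Rightarrow> real^'n^'n) \<Rightarrow> (int \<Rightarrow> real^'n) \<Rightarrow> (int \<Rightarrow> real^'n)
    \<Rightarrow> (int \<Rightarrow> real) \<Rightarrow> nat \<Rightarrow> int \<Rightarrow> real" where
  "Psi At Bt Ct u \<mu> k =
     Ct (k + int \<mu>) \<bullet> (\<Sum>s\<in>{1..<\<mu>}. u (k + int s) *\<^sub>R
                         (oprod (\<lambda>m. At (k + int m)) (s + 1) (\<mu> - 1) *v Bt (k + int s)))"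

definition outer :: "real^'n \<Rightarrow> real^'n \<Rightarrow> real^'n^'n" where
  "outer b c = (\<chi> i j. b $ i * c $ j)"

end

theory Submission
  imports Defs
begin

text \<open>Since every component model has the same relative degree and the global relative degree
  is positive, there is no direct feedthrough. Iterating the state equation \<mu> times along the
  actual trajectory, with the switched matrices frozen at their realised values, expresses the
  output affinely as y(k+\<mu>) = \<C>(k) x(k) + \<D>(k) u(k) + \<Psi>(k) + \<G>(k). Here \<D>(k) is the
  coefficient of u(k) for the realised switching sequence, which is nonzero by the definition
  of \<mu>, so this equation can be solved for u(k); substituting the solution into the state
  equation gives the inverse system. The inverse is only implicit because the switched matrices
  at times after k depend on u(k): for the scalar system x(k+1) = u(k), y(k) = |x(k)| (two
  locations, output coefficient \<plusminus>1 according to the sign of the state) both u(k) = 1 and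
  u(k) = -1 produce y(k+1) = 1.\<close>

lemma oprod_empty: "oprod M (Suc b) b = mat 1"
  by (simp add: oprod_def)

lemma oprod_Suc: "a \<le> Suc b \<Longrightarrow> oprod M a (Suc b) = M (Suc b) ** oprod M a b"
  by (simp add: oprod_def)

lemma outer_mult_vector: "outer b c *v x = (c \<bullet> x) *\<^sub>R b"
  by (simp add: vec_eq_iff outer_def matrix_vector_mult_def inner_vec_def sum_distrib_left mult_ac)

lemma matrix_vector_mult_sum: "(M::real^'n^'m) *v sum f S = (\<Sum>s\<in>S. M *v f s)"
  by (simp add: linear_sum[OF matrix_vector_mul_linear] o_def)

lemma ltv_state_expansion:
  fixes x :: "int \<Rightarrow> real^'n"
  assumes state: "\<And>t. x (t + 1) = At t *v x t + u t *\<^sub>R Bt t + Ft t"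
  shows "x (k + int (Suc n)) = oprod (\<lambda>m. At (k + int m)) 0 n *v x k
     + (\<Sum>s\<le>n. oprod (\<lambda>m. At (k + int m)) (Suc s) n
                  *v (u (k + int s) *\<^sub>R Bt (k + int s) + Ft (k + int s)))"
proof (induction n)
  case 0
  then show ?case using state[of k] by (simp add: oprod_def)
next
  case (Suc n)
  let ?M = "\<lambda>m. At (k + int m)"
  have "x (k + int (Suc (Suc n))) = ?M (Suc n) *v x (k + int (Suc n))
      + (u (k + int (Suc n)) *\<^sub>R Bt (k + int (Suc n)) + Ft (k + int (Suc n)))"
    using state[of "k + int (Suc n)"] by (simp add: add.assoc)
  also have "?M (Suc n) *v x (k + int (Suc n)) = oprod ?M 0 (Suc n) *v x k
      + (\<Sum>s\<le>n. oprod ?M (Suc s) (Suc n) *v (u (k + int s) *\<^sub>R Bt (k + int s) + Ft (k + int s)))"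
    unfolding Suc matrix_vector_right_distrib matrix_vector_mult_sum
    by (simp add: oprod_Suc matrix_vector_mul_assoc)
  finally show ?case by (simp add: oprod_empty)
qed

lemma ltv_output_expansion:
  fixes x :: "int \<Rightarrow> real^'n"
  assumes state: "\<And>t. x (t + 1) = At t *v x t + u t *\<^sub>R Bt t + Ft t"
    and out: "\<And>t. y t = Ct t \<bullet> x t + Gt t"
    and mu1: "\<mu> \<ge> 1"
  shows "y (k + int \<mu>) = calC At Ct \<mu> k \<bullet> x k + calD At Bt Ct \<mu> k * u k
      + Psi At Bt Ct u \<mu> k + calG At Ft Ct Gt \<mu> k"
proof -
  obtain n where n: "\<mu> = Suc n" using mu1 by (cases \<mu>) auto
  let ?L = "\<lambda>a. oprod (\<lambda>m. At (k + int m)) a n"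
  let ?Bu = "\<lambda>s. u (k + int s) *\<^sub>R (?L (Suc s) *v Bt (k + int s))"
  have "(\<Sum>s\<le>n. ?L (Suc s) *v (u (k + int s) *\<^sub>R Bt (k + int s) + Ft (k + int s)))
      = (\<Sum>s\<le>n. ?Bu s) + (\<Sum>s\<le>n. ?L (Suc s) *v Ft (k + int s))"
    by (simp add: matrix_vector_right_distrib matrix_vector_mult_scaleR sum.distrib)
  also have "(\<Sum>s\<le>n. ?Bu s) = ?Bu 0 + (\<Sum>s\<in>{1..<\<mu>}. ?Bu s)"
  proof -
    have "{..n} = insert 0 {1..<\<mu>}" using n by auto
    then show ?thesis by simp
  qed
  finally have inputs_split: "(\<Sum>s\<le>n. ?L (Suc s) *v (u (k + int s) *\<^sub>R Bt (k + int s) + Ft (k + int s)))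
      = ?Bu 0 + (\<Sum>s\<in>{1..<\<mu>}. ?Bu s) + (\<Sum>s\<le>n. ?L (Suc s) *v Ft (k + int s))" .
  have "y (k + int \<mu>) = Ct (k + int \<mu>) \<bullet> x (k + int \<mu>) + Gt (k + int \<mu>)"
    by (rule out)
  also have "x (k + int \<mu>) = ?L 0 *v x k + ?Bu 0 + (\<Sum>s\<in>{1..<\<mu>}. ?Bu s)
      + (\<Sum>s\<le>n. ?L (Suc s) *v Ft (k + int s))"
    unfolding n ltv_state_expansion[of x At u Bt Ft, OF state] inputs_split by (simp add: add.assoc)
  finally show ?thesis
    unfolding calC_def calD_def calG_def Psi_def n lessThan_Suc_atMost
    by (simp add: inner_add_right dot_lmul_matrix matrix_vector_mult_scaleR)
qed

lemma ltv_inverse_system: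
  fixes x :: "int \<Rightarrow> real^'n"
  assumes state: "\<And>t. x (t + 1) = At t *v x t + u t *\<^sub>R Bt t + Ft t"
    and out: "\<And>t. y t = Ct t \<bullet> x t + Gt t"
    and mu1: "\<mu> \<ge> 1"
    and Dnz: "calD At Bt Ct \<mu> k \<noteq> 0"
  defines "Dbar \<equiv> inverse (calD At Bt Ct \<mu> k)"
    and "Cbar \<equiv> - (inverse (calD At Bt Ct \<mu> k) *\<^sub>R calC At Ct \<mu> k)"
    and "Gbar \<equiv> - (inverse (calD At Bt Ct \<mu> k) * calG At Ft Ct Gt \<mu> k)"
    and "\<Psi> \<equiv> Psi At Bt Ct u \<mu> k"
  shows "u k = Cbar \<bullet> x k + Dbar * y (k + int \<mu>) + Gbar - Dbar * \<Psi>"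
    and "x (k + 1) = (At k + outer (Bt k) Cbar) *v x k + y (k + int \<mu>) *\<^sub>R (Dbar *\<^sub>R Bt k)
           + (Ft k + Gbar *\<^sub>R Bt k) - (Dbar * \<Psi>) *\<^sub>R Bt k"
proof -
  show input: "u k = Cbar \<bullet> x k + Dbar * y (k + int \<mu>) + Gbar - Dbar * \<Psi>"
    using Dnz unfolding ltv_output_expansion[of x At u Bt Ft y Ct Gt, OF state out mu1]
    by (simp add: assms(5-) field_simps)
  have "x (k + 1) = At k *v x k + u k *\<^sub>R Bt k + Ft k" by (rule state)
  then show "x (k + 1) = (At k + outer (Bt k) Cbar) *v x k + y (k + int \<mu>) *\<^sub>R (Dbar *\<^sub>R Bt k)
           + (Ft k + Gbar *\<^sub>R Bt k) - (Dbar * \<Psi>) *\<^sub>R Bt k"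
    unfolding input by (simp add: matrix_vector_mult_add_rdistrib outer_mult_vector algebra_simps)
qed

definition location :: "('q \<Rightarrow> (real^'p) set) \<Rightarrow> real^'n^'p \<Rightarrow> real^'p \<Rightarrow> real^'n \<Rightarrow> 'q" where
  "location \<Delta> P \<theta> x = (THE q. delta P \<theta> x \<in> \<Delta> q)"

lemma selM_location:
  assumes wf: "pwa_wellformed \<Delta> P \<theta>"
  shows "selM \<Delta> P \<theta> M k x = M (location \<Delta> P \<theta> x) k"
proof -
  have unique: "\<exists>!q. delta P \<theta> x \<in> \<Delta> q" using wf by (simp add: pwa_wellformed_def)
  have "Ksel \<Delta> P \<theta> q x = (if q = location \<Delta> P \<theta> x then 1 else 0)" for q
    using theI'[OF unique] unique by (auto simp: Ksel_def location_def)
  then have "selM \<Delta> P \<theta> M k x = (\<Sum>q\<in>UNIV. if q = location \<Delta> P \<theta> x then M q k else 0)"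
    unfolding selM_def by (intro sum.cong) auto
  then show ?thesis by simp
qed

lemma no_feedthrough_if_global_reldeg_pos:
  assumes A4: "\<exists>\<mu>c. \<forall>q k. comp_reldeg A B C D q k \<mu>c"
    and mu: "global_reldeg A B C D \<mu>" and mu1: "\<mu> \<ge> 1"
  shows "D q k = 0"
proof -
  obtain \<mu>c where \<mu>c: "\<And>q k. comp_reldeg A B C D q k \<mu>c" using A4 by blast
  have "\<mu>c \<noteq> 0"
  proof
    assume "\<mu>c = 0"
    then have "\<forall>k \<sigma>. sw_coef A B C D \<sigma> k 0 \<noteq> 0"
      using \<mu>c by (simp add: comp_reldeg_def comp_markov_def sw_coef_def)
    then show False using mu mu1 by (force simp: global_reldeg_def)
  qed
  then have "comp_markov A B C D q k 0 = 0"
    using \<mu>c[of q k] unfolding comp_reldeg_def by blast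
  then show ?thesis by (simp add: comp_markov_def)
qed

lemma calD_trajectory_eq_sw_coef:
  fixes x :: "int \<Rightarrow> real^'n"
  assumes wf: "pwa_wellformed \<Delta> P \<theta>" and mu1: "\<mu> \<ge> 1"
  shows "calD (\<lambda>t. selM \<Delta> P \<theta> A t (x t)) (\<lambda>t. selM \<Delta> P \<theta> B t (x t)) (\<lambda>t. selM \<Delta> P \<theta> C t (x t)) \<mu> k
       = sw_coef A B C D (\<lambda>m. location \<Delta> P \<theta> (x (k + int m))) k \<mu>"
  using mu1 by (simp add: calD_def sw_coef_def selM_location[OF wf])

definition sign_locations :: "bool \<Rightarrow> (real^1) set" where
  "sign_locations q = {\<chi> i. if q then 1 else 0}"

definition sign_gain :: "bool \<Rightarrow> int \<Rightarrow> real^1" where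
  "sign_gain q k = (if q then 1 else -1)"

lemma delta_sign_locations: "delta (mat 1) 0 z \<in> sign_locations q \<longleftrightarrow> (q \<longleftrightarrow> z$1 \<ge> 0)"
  by (auto simp: delta_def heav_def sign_locations_def vec_eq_iff forall_1)

lemma selM_sign_locations: "selM sign_locations (mat 1) 0 M k z = M (z$1 \<ge> 0) k"
  by (cases "z$1 \<ge> 0") (simp_all add: selM_def Ksel_def delta_sign_locations UNIV_bool)

lemma pwa_wellformed_sign_locations: "pwa_wellformed sign_locations (mat 1) 0"
  unfolding pwa_wellformed_def delta_sign_locations by (auto simp: sign_locations_def)

lemma inner_vec_1: "(a::real^1) \<bullet> b = a$1 * b$1"
  by (simp add: inner_vec_def sum_1)

lemma abs_example_run_out:
  "run_out sign_locations (mat 1) 0 (\<lambda>_ _. 0) (\<lambda>_ _. 1) (\<lambda>_ _. 0) sign_gain (\<lambda>_ _. 0) (\<lambda>_ _. 0)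
     k x0 v 1 = \<bar>v k\<bar>"
  by (simp add: run_out_def selM_sign_locations sign_gain_def inner_vec_1)

lemma abs_example_traj:
  "is_traj sign_locations (mat 1) 0 (\<lambda>_ _. 0) (\<lambda>_ _. 1) (\<lambda>_ _. 0) sign_gain (\<lambda>_ _. 0) (\<lambda>_ _. 0)
     (\<lambda>_. 1) (\<lambda>_. 1) (\<lambda>_. 1)"
  by (simp add: is_traj_def selM_sign_locations sign_gain_def inner_vec_1)

lemma abs_example_reachable:
  "all_locations_reachable sign_locations (mat 1) 0 (\<lambda>_ _. 0) (\<lambda>_ _. 1) (\<lambda>_ _. 0) 1"
  unfolding all_locations_reachable_def
proof
  fix q
  show "\<exists>v N. delta (mat 1) 0 (run sign_locations (mat 1) 0 (\<lambda>_ _. 0) (\<lambda>_ _. 1) (\<lambda>_ _. 0) 0 1 v N)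
      \<in> sign_locations q"
  proof (cases q)
    case True
    then show ?thesis by (intro exI[of _ "\<lambda>_. 0"] exI[of _ 0]) (simp add: delta_sign_locations)
  next
    case False
    then show ?thesis
      by (intro exI[of _ "\<lambda>_. -1"] exI[of _ 1]) (simp add: delta_sign_locations selM_sign_locations)
  qed
qed

lemma abs_example_comp_reldeg: "comp_reldeg (\<lambda>_ _. 0) (\<lambda>_ _. 1) sign_gain (\<lambda>_ _. 0) q k 1"
  by (simp add: comp_reldeg_def comp_markov_def oprod_def sign_gain_def inner_vec_1)

lemma abs_example_global_reldeg: "global_reldeg (\<lambda>_ _. 0) (\<lambda>_ _. 1) sign_gain (\<lambda>_ _. 0) 1"
  by (simp add: global_reldeg_def sw_coef_def oprod_def sign_gain_def inner_vec_1)

lemma pwa_inverse_not_explicit: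
   "\<exists>(\<Delta>' :: bool \<Rightarrow> (real^1) set) (P' :: real^1^1) (\<theta>' :: real^1)
       (A' :: bool \<Rightarrow> int \<Rightarrow> real^1^1) (B' :: bool \<Rightarrow> int \<Rightarrow> real^1) (F' :: bool \<Rightarrow> int \<Rightarrow> real^1)
       (C' :: bool \<Rightarrow> int \<Rightarrow> real^1) (D' :: bool \<Rightarrow> int \<Rightarrow> real) (G' :: bool \<Rightarrow> int \<Rightarrow> real)
       (x' :: int \<Rightarrow> real^1) (u' :: int \<Rightarrow> real) (y' :: int \<Rightarrow> real) (\<mu>' :: nat).
       pwa_wellformed \<Delta>' P' \<theta>' \<and> is_traj \<Delta>' P' \<theta>' A' B' F' C' D' G' x' u' y' \<and>
       all_locations_reachable \<Delta>' P' \<theta>' A' B' F' (x' 0) \<and>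
       (\<exists>\<mu>c. \<forall>q k. comp_reldeg A' B' C' D' q k \<mu>c) \<and>
       global_reldeg A' B' C' D' \<mu>' \<and> \<mu>' \<ge> 1 \<and>
       (\<exists>k. \<not> (\<exists>!v. run_out \<Delta>' P' \<theta>' A' B' F' C' D' G' k (x' k) (u'(k := v)) \<mu>'
                    = y' (k + int \<mu>')))"
proof -
  have abs_not_injective: "\<not> (\<exists>!v::real. \<bar>v\<bar> = 1)"
  proof
    assume "\<exists>!v::real. \<bar>v\<bar> = 1"
    then have "(1::real) = -1" by (metis abs_minus_cancel abs_one)
    then show False by simp
  qed
  show ?thesis
    by (intro exI conjI allI)
      (rule pwa_wellformed_sign_locations abs_example_traj abs_example_reachable
        abs_example_comp_reldeg abs_example_global_reldeg order_refl
       | simp add: abs_example_run_out[unfolded One_nat_def] abs_not_injective)+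
qed

theorem theorem2:
  fixes \<Delta> :: "'q::finite \<Rightarrow> (real^'p) set" and P :: "real^'n^'p" and \<theta> :: "real^'p"
    and A :: "'q \<Rightarrow> int \<Rightarrow> real^'n^'n" and B F C :: "'q \<Rightarrow> int \<Rightarrow> real^'n"
    and D G :: "'q \<Rightarrow> int \<Rightarrow> real"
    and x :: "int \<Rightarrow> real^'n" and u y :: "int \<Rightarrow> real" and \<mu> :: nat
  assumes wf: "pwa_wellformed \<Delta> P \<theta>"
    and traj: "is_traj \<Delta> P \<theta> A B F C D G x u y"
    and A1: "all_locations_reachable \<Delta> P \<theta> A B F (x 0)"
    and A4: "\<exists>\<mu>c. \<forall>q k. comp_reldeg A B C D q k \<mu>c"
    and mu: "global_reldeg A B C D \<mu>" and mu1: "\<mu> \<ge> 1"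
  shows
   "(\<forall>k. let At = (\<lambda>t. selM \<Delta> P \<theta> A t (x t)); Bt = (\<lambda>t. selM \<Delta> P \<theta> B t (x t));
             Ft = (\<lambda>t. selM \<Delta> P \<theta> F t (x t)); Ct = (\<lambda>t. selM \<Delta> P \<theta> C t (x t));
             Gt = (\<lambda>t. selM \<Delta> P \<theta> G t (x t));
             Dc = calD At Bt Ct \<mu> k;
             Dbar = inverse Dc;
             Cbar = - (Dbar *\<^sub>R calC At Ct \<mu> k);
             Gbar = - (Dbar * calG At Ft Ct Gt \<mu> k);
             Abar = At k + outer (Bt k) Cbar;
             Bbar = Dbar *\<^sub>R Bt k;
             Fbar = Ft k + Gbar *\<^sub>R Bt k;
             \<Psi> = Psi At Bt Ct u \<mu> k
         in Dc \<noteq> 0 \<and>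
            x (k + 1) = Abar *v x k + y (k + int \<mu>) *\<^sub>R Bbar + Fbar - (Dbar * \<Psi>) *\<^sub>R Bt k \<and>
            u k = Cbar \<bullet> x k + Dbar * y (k + int \<mu>) + Gbar - Dbar * \<Psi>)
    \<and>
    (\<exists>(\<Delta>' :: bool \<Rightarrow> (real^1) set) (P' :: real^1^1) (\<theta>' :: real^1)
       (A' :: bool \<Rightarrow> int \<Rightarrow> real^1^1) (B' :: bool \<Rightarrow> int \<Rightarrow> real^1) (F' :: bool \<Rightarrow> int \<Rightarrow> real^1)
       (C' :: bool \<Rightarrow> int \<Rightarrow> real^1) (D' :: bool \<Rightarrow> int \<Rightarrow> real) (G' :: bool \<Rightarrow> int \<Rightarrow> real)
       (x' :: int \<Rightarrow> real^1) (u' :: int \<Rightarrow> real) (y' :: int \<Rightarrow> real) (\<mu>' :: nat).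
       pwa_wellformed \<Delta>' P' \<theta>' \<and> is_traj \<Delta>' P' \<theta>' A' B' F' C' D' G' x' u' y' \<and>
       all_locations_reachable \<Delta>' P' \<theta>' A' B' F' (x' 0) \<and>
       (\<exists>\<mu>c. \<forall>q k. comp_reldeg A' B' C' D' q k \<mu>c) \<and>
       global_reldeg A' B' C' D' \<mu>' \<and> \<mu>' \<ge> 1 \<and>
       (\<exists>k. \<not> (\<exists>!v. run_out \<Delta>' P' \<theta>' A' B' F' C' D' G' k (x' k) (u'(k := v)) \<mu>'
                    = y' (k + int \<mu>'))))"
proof -
  let ?At = "\<lambda>t. selM \<Delta> P \<theta> A t (x t)" and ?Bt = "\<lambda>t. selM \<Delta> P \<theta> B t (x t)"
    and ?Ft = "\<lambda>t. selM \<Delta> P \<theta> F t (x t)" and ?Ct = "\<lambda>t. selM \<Delta> P \<theta> C t (x t)"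
    and ?Gt = "\<lambda>t. selM \<Delta> P \<theta> G t (x t)"
  have state: "\<And>t. x (t + 1) = ?At t *v x t + u t *\<^sub>R ?Bt t + ?Ft t"
    using traj by (simp add: is_traj_def)
  have out: "\<And>t. y t = ?Ct t \<bullet> x t + ?Gt t"
    using traj no_feedthrough_if_global_reldeg_pos[OF A4 mu mu1] by (simp add: is_traj_def selM_def)
  have Dnz: "calD ?At ?Bt ?Ct \<mu> k \<noteq> 0" for k
    using mu by (simp add: calD_trajectory_eq_sw_coef[OF wf mu1, where D = D] global_reldeg_def)
  show ?thesis
    unfolding Let_def
    using Dnz ltv_inverse_system[OF state out mu1 Dnz] pwa_inverse_not_explicit
    by blast
qed

end
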